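(* Let $G$ be a finite connected simple graph with $n$ vertices and $m\ge n$ edges, $a,b\in\mathbb{C}$, $c=a-b$, $\mathbf d:\ell^2(R(G))\to\ell^2(V(G))$ linear with $\mathbf d\mathbf d^*=\mathbf I_n$, $\mathbf C=a\,\mathbf d^*\mathbf d+b(\mathbf I_{2m}-\mathbf d^*\mathbf d)$ and $\mathbf U=\mathbf S\mathbf C$. Then the eigenvalues of $\mathbf U$ (with algebraic multiplicity) are: (1) $2n$ eigenvalues $\lambda=\frac{c\mu\pm\sqrt{c^2\mu^2+4ab}}{2}$, one pair for each eigenvalue $\mu$ (counted with multiplicity) of the $n\times n$ matrix $\mathbf d\mathbf S\mathbf d^*$; (2) the remaining $2(m-n)$ eigenvalues are $b$ and $-b$, each with multiplicity $m-n$.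
   Context: For a simple graph $G$, $R(G)=\{(u,v),(v,u): uv\in E(G)\}$ is the set of arcs (so $|R(G)|=2m$); for $e=(u,v)$, $e^{-1}=(v,u)$. $\ell^2(V(G))\cong\mathbb{C}^n$ and $\ell^2(R(G))\cong\mathbb{C}^{2m}$ with standard inner products; $\mathbf d^*$ is the adjoint of $\mathbf d$. $\mathbf S$ is the arc-reversal operator on $\ell^2(R(G))$: $(\mathbf S\omega)(e)=\omega(e^{-1})$. $\mathbf I_k$ is the identity of size $k$. *)

theory Defs
  imports "Jordan_Normal_Form.Schur_Decomposition" "Jordan_Normal_Form.Char_Poly"
begin

definition simple_graph :: "nat \<Rightarrow> (nat \<Rightarrow> nat \<Rightarrow> bool) \<Rightarrow> bool" where
  "simple_graph n E \<longleftrightarrow> (\<forall>u v. E u v \<longrightarrow> u < n \<and> v < n \<and> u \<noteq> v \<and> E v u)"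

definition graph_connected :: "nat \<Rightarrow> (nat \<Rightarrow> nat \<Rightarrow> bool) \<Rightarrow> bool" where
  "graph_connected n E \<longleftrightarrow> (\<forall>u<n. \<forall>v<n. E\<^sup>*\<^sup>* u v)"

definition num_edges :: "(nat \<Rightarrow> nat \<Rightarrow> bool) \<Rightarrow> nat" where
  "num_edges E = card {{u, v} | u v. E u v}"

text \<open>An enumeration of the arc set R(G), identifying l2(R(G)) with C^(2m).\<close>
definition arc_enum :: "nat \<Rightarrow> (nat \<Rightarrow> nat \<Rightarrow> bool) \<Rightarrow> (nat \<times> nat) list \<Rightarrow> bool" where
  "arc_enum n E arcs \<longleftrightarrow> distinct arcs \<and> set arcs = {(u, v). E u v}"

definition arc_reversal :: "(nat \<times> nat) list \<Rightarrow> complex mat" where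
  "arc_reversal arcs = mat (length arcs) (length arcs)
     (\<lambda>(i, j). if arcs ! j = (snd (arcs ! i), fst (arcs ! i)) then 1 else 0)"

end

theory Submission
  imports Defs
begin

text \<open>Write the coin as \<open>C = b + c K\<close> with \<open>K = d\<^sup>* d\<close>. Since the arc reversal \<open>S\<close> is an
involution, \<open>(x + b S) (x - b S) = x\<^sup>2 - b\<^sup>2\<close>, so multiplying \<open>x - S C\<close> by \<open>x + b S\<close> leaves
\<open>(x\<^sup>2 - b\<^sup>2) - c (x S + b) d\<^sup>* d\<close>, a rank-\<open>n\<close> perturbation of a scalar matrix. The identity
\<open>det (1 + A B) = det (1 + B A)\<close> turns its determinant into the \<open>n \<times> n\<close> determinant
\<open>det ((x\<^sup>2 - a b) - c x d S d\<^sup>*)\<close>, which factors over the eigenvalues \<open>\<mu>\<close> of \<open>d S d\<^sup>*\<close>.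
The factor \<open>det (x + b S) = (x\<^sup>2 - b\<^sup>2)\<^sup>m\<close> holds because \<open>S\<close> is an involution without fixed
arcs, hence traceless, so that its eigenvalues \<open>1\<close> and \<open>-1\<close> both occur \<open>m\<close> times. The resulting
identity of polynomials in \<open>x\<close> holds away from \<open>\<plusminus>b\<close>, hence everywhere.\<close>

definition trace :: "'a :: comm_ring_1 mat \<Rightarrow> 'a" where
  "trace A = (\<Sum>i<dim_row A. A $$ (i, i))"

lemma trace_mult_comm:
  fixes A B :: "'a :: comm_ring_1 mat"
  assumes "A \<in> carrier_mat n k" and "B \<in> carrier_mat k n"
  shows "trace (A * B) = trace (B * A)"
proof -
  have "trace (A * B) = (\<Sum>i<n. \<Sum>j<k. A $$ (i, j) * B $$ (j, i))"
    using assms by (auto simp: trace_def scalar_prod_def lessThan_atLeast0 intro!: sum.cong)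
  also have "\<dots> = (\<Sum>j<k. \<Sum>i<n. B $$ (j, i) * A $$ (i, j))"
    by (subst sum.swap) (intro sum.cong refl mult.commute)
  also have "\<dots> = trace (B * A)"
    using assms by (auto simp: trace_def scalar_prod_def lessThan_atLeast0 intro!: sum.cong)
  finally show ?thesis .
qed

lemma trace_similar:
  fixes A B :: "'a :: comm_ring_1 mat"
  assumes "similar_mat A B"
  shows "trace A = trace B"
proof -
  obtain n P Q where A: "A = P * B * Q" and QP: "Q * P = 1\<^sub>m n"
    and P: "P \<in> carrier_mat n n" and B: "B \<in> carrier_mat n n" and Q: "Q \<in> carrier_mat n n"
    using similar_matD[OF assms] by auto
  have "trace A = trace (Q * (P * B))"
    unfolding A by (rule trace_mult_comm) (use P B Q in auto)
  also have "Q * (P * B) = B"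
    using B by (simp add: assoc_mult_mat[OF Q P B, symmetric] QP)
  finally show ?thesis .
qed

lemma trace_eq_sum_list_diag_mat: "trace A = sum_list (diag_mat A)"
  by (simp add: trace_def diag_mat_def sum_list_sum_nth atLeast0LessThan)

lemma poly_char_poly_eq_det:
  fixes A :: "'a :: field mat"
  assumes A: "A \<in> carrier_mat n n"
  shows "poly (char_poly A) x = det (x \<cdot>\<^sub>m 1\<^sub>m n - A)"
proof -
  have "- char_matrix A x = x \<cdot>\<^sub>m 1\<^sub>m n - A"
    using A by (intro eq_matI) (auto simp: char_matrix_def)
  then show ?thesis using char_poly_matrix[OF A] by simp
qed

lemma eigenvalue_involution:
  fixes A :: "'a :: idom mat"
  assumes A: "A \<in> carrier_mat n n" and AA: "A * A = 1\<^sub>m n" and ev: "eigenvalue A e"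
  shows "e = 1 \<or> e = -1"
proof -
  obtain v where v: "eigenvector A v e" using ev by (auto simp: eigenvalue_def)
  have v_carrier: "v \<in> carrier_vec n" and "v \<noteq> 0\<^sub>v n"
    using v A by (auto simp: eigenvector_def)
  then obtain i where i: "i < n" "v $ i \<noteq> 0" by (auto simp: vec_eq_iff)
  have "A ^\<^sub>m 2 = 1\<^sub>m n" using A AA by (simp add: numeral_2_eq_2)
  then have "v = e ^ 2 \<cdot>\<^sub>v v"
    using eigenvector_pow[OF A v, of 2] v_carrier by simp
  then have "v $ i = e ^ 2 * v $ i" using i v_carrier by (metis index_smult_vec(1) carrier_vecD)
  then have "e ^ 2 = 1" using i by simp
  then show ?thesis by (simp add: power2_eq_1_iff)
qed

lemma det_one_add_mult_comm:
  fixes A B :: "'a :: idom mat"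
  assumes A: "A \<in> carrier_mat N n" and B: "B \<in> carrier_mat n N"
  shows "det (1\<^sub>m N + A * B) = det (1\<^sub>m n + B * A)"
proof -
  have AB: "A * B \<in> carrier_mat N N" and BA: "B * A \<in> carrier_mat n n" using A B by auto
  define L where "L = four_block_mat (1\<^sub>m N) (0\<^sub>m N n) B (1\<^sub>m n)"
  define R1 where "R1 = four_block_mat (1\<^sub>m N) (-A) (0\<^sub>m n N) (1\<^sub>m n + B * A)"
  define R2 where "R2 = four_block_mat (1\<^sub>m N + A * B) (-A) (0\<^sub>m n N) (1\<^sub>m n)"
  note block_mult = mult_four_block_mat
    [where ?nr1.0 = N and ?n1.0 = N and ?n2.0 = n and ?nr2.0 = n and ?nc1.0 = N and ?nc2.0 = n]
  have "L * R1 = four_block_mat (1\<^sub>m N) (-A) B (1\<^sub>m n)"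
    unfolding L_def R1_def using A B BA by (subst block_mult) auto
  also have "\<dots> = R2 * L"
    unfolding L_def R2_def using A B AB by (subst block_mult) auto
  finally have "det (L * R1) = det (R2 * L)" by simp
  moreover have "L \<in> carrier_mat (N + n) (N + n)" "R1 \<in> carrier_mat (N + n) (N + n)"
    "R2 \<in> carrier_mat (N + n) (N + n)"
    unfolding L_def R1_def R2_def using A B AB BA by auto
  ultimately have "det L * det R1 = det R2 * det L" by (simp add: det_mult)
  moreover have "det L = 1" unfolding L_def
    by (subst det_four_block_mat_upper_right_zero[of _ N _ n]) (use B in auto)
  moreover have "det R1 = det (1\<^sub>m n + B * A)" unfolding R1_def
    by (subst det_four_block_mat_lower_left_zero[of _ N _ n]) (use A BA in auto)
  moreover have "det R2 = det (1\<^sub>m N + A * B)" unfolding R2_def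
    by (subst det_four_block_mat_lower_left_zero[of _ N _ n]) (use A AB in auto)
  ultimately show ?thesis by simp
qed

lemma det_scalar_minus_mult_comm:
  fixes A B :: "'a :: field mat"
  assumes A: "A \<in> carrier_mat N n" and B: "B \<in> carrier_mat n N" and k: "k \<noteq> 0"
  shows "k ^ n * det (k \<cdot>\<^sub>m 1\<^sub>m N - A * B) = k ^ N * det (k \<cdot>\<^sub>m 1\<^sub>m n - B * A)"
proof -
  define A' where "A' = (- 1 / k) \<cdot>\<^sub>m A"
  have A': "A' \<in> carrier_mat N n" using A by (simp add: A'_def)
  have "k \<cdot>\<^sub>m 1\<^sub>m N - A * B = k \<cdot>\<^sub>m (1\<^sub>m N + A' * B)"
    using A B k by (intro eq_matI) (auto simp: A'_def field_simps)
  moreover have "k \<cdot>\<^sub>m 1\<^sub>m n - B * A = k \<cdot>\<^sub>m (1\<^sub>m n + B * A')"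
    using A B k by (intro eq_matI) (auto simp: A'_def field_simps)
  ultimately show ?thesis
    using det_one_add_mult_comm[OF A' B] A' B by (simp add: power_add[symmetric] add.commute)
qed

lemma det_scalar_minus_smult_char_poly:
  fixes M :: "'a :: field mat"
  assumes M: "M \<in> carrier_mat n n"
    and char_poly: "char_poly M = (\<Prod>\<mu>\<leftarrow>\<mu>s. [:- \<mu>, 1:])"
  shows "det (z \<cdot>\<^sub>m 1\<^sub>m n - s \<cdot>\<^sub>m M) = (\<Prod>\<mu>\<leftarrow>\<mu>s. z - s * \<mu>)"
proof -
  have length: "length \<mu>s = n"
    using degree_monic_char_poly[OF M] degree_linear_factors[of uminus \<mu>s] char_poly by simp
  show ?thesis
  proof (cases "s = 0")
    case True
    then have "z \<cdot>\<^sub>m 1\<^sub>m n - s \<cdot>\<^sub>m M = z \<cdot>\<^sub>m 1\<^sub>m n" using M by (intro eq_matI) auto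
    then show ?thesis using True length by (simp add: map_replicate_const)
  next
    case False
    have "z \<cdot>\<^sub>m 1\<^sub>m n - s \<cdot>\<^sub>m M = s \<cdot>\<^sub>m ((z / s) \<cdot>\<^sub>m 1\<^sub>m n - M)"
      using False M by (intro eq_matI) (auto simp: field_simps)
    then have "det (z \<cdot>\<^sub>m 1\<^sub>m n - s \<cdot>\<^sub>m M) = s ^ length \<mu>s * poly (char_poly M) (z / s)"
      using M length by (simp add: poly_char_poly_eq_det[OF M])
    also have "\<dots> = s ^ length \<mu>s * (\<Prod>\<mu>\<leftarrow>\<mu>s. z / s - \<mu>)"
      by (simp add: char_poly poly_prod_list o_def)
    also have "\<dots> = (\<Prod>\<mu>\<leftarrow>\<mu>s. z - s * \<mu>)"
      using False by (induction \<mu>s) (simp_all add: field_simps)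
    finally show ?thesis .
  qed
qed

lemma prod_list_plus_minus_one:
  fixes xs :: "'a :: {comm_ring_1, ring_char_0} list" and f :: "'a \<Rightarrow> 'b :: comm_monoid_mult"
  assumes "set xs \<subseteq> {1, -1}" and "sum_list xs = 0"
  shows "(\<Prod>x\<leftarrow>xs. f x) = (f 1 * f (-1)) ^ (length xs div 2)"
proof -
  define p q where "p = count_list xs 1" and "q = count_list xs (-1)"
  have "(\<Prod>x\<leftarrow>xs. f x) = f 1 ^ p * f (-1) ^ q \<and> sum_list xs = of_nat p - of_nat q
    \<and> length xs = p + q"
    unfolding p_def q_def using assms(1)
  proof (induction xs)
    case (Cons x xs)
    have "1 \<noteq> (-1 :: 'a)" by (metis one_neq_neg_one)
    with Cons show ?case by (auto simp: algebra_simps mult_ac)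
  qed simp
  moreover from this have "p = q" using assms(2) by simp
  ultimately show ?thesis by (simp add: power_mult_distrib)
qed

lemma det_scalar_minus_smult_involution:
  fixes S :: "complex mat"
  assumes S: "S \<in> carrier_mat (2 * m) (2 * m)" and SS: "S * S = 1\<^sub>m (2 * m)"
    and trace: "trace S = 0"
  shows "det (x \<cdot>\<^sub>m 1\<^sub>m (2 * m) - \<beta> \<cdot>\<^sub>m S) = (x\<^sup>2 - \<beta>\<^sup>2) ^ m"
proof -
  obtain es where "char_poly S = (\<Prod>e\<leftarrow>es. [:- e, 1:])"
    using char_poly_factorized[OF S] by blast
  then obtain T where T: "T \<in> carrier_mat (2 * m) (2 * m)" and "upper_triangular T"
    and similar: "similar_mat S T"
    using schur_decomposition_exists[OF S] by blast
  define ts where "ts = diag_mat T"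
  have char_poly: "char_poly S = (\<Prod>t\<leftarrow>ts. [:- t, 1:])"
    unfolding ts_def char_poly_similar[OF similar]
    by (rule char_poly_upper_triangular) fact+
  have "set ts \<subseteq> {1, -1}"
  proof
    fix t assume "t \<in> set ts"
    then have "poly (char_poly S) t = 0"
      by (auto simp: char_poly poly_prod_list o_def prod_list_zero_iff)
    then have "eigenvalue S t" using eigenvalue_root_char_poly[OF S] by simp
    then show "t \<in> {1, -1}" using eigenvalue_involution[OF S SS] by auto
  qed
  moreover have "sum_list ts = 0"
    using trace trace_similar[OF similar] by (simp add: ts_def trace_eq_sum_list_diag_mat)
  moreover have "length ts = 2 * m" using T by (simp add: ts_def diag_mat_def)
  ultimately have "(\<Prod>t\<leftarrow>ts. x - \<beta> * t) = ((x - \<beta>) * (x + \<beta>)) ^ m"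
    using prod_list_plus_minus_one[of ts "\<lambda>t. x - \<beta> * t"] by simp
  then show ?thesis
    using det_scalar_minus_smult_char_poly[OF S char_poly]
    by (simp add: power2_eq_square algebra_simps)
qed

lemma scalar_add_involution_mult:
  fixes S K :: "'a :: comm_ring_1 mat"
  assumes S: "S \<in> carrier_mat N N" and SS: "S * S = 1\<^sub>m N" and K: "K \<in> carrier_mat N N"
  shows "(x \<cdot>\<^sub>m 1\<^sub>m N + b \<cdot>\<^sub>m S) * (x \<cdot>\<^sub>m 1\<^sub>m N - S * (b \<cdot>\<^sub>m 1\<^sub>m N + c \<cdot>\<^sub>m K))
    = (x\<^sup>2 - b\<^sup>2) \<cdot>\<^sub>m 1\<^sub>m N - c \<cdot>\<^sub>m ((x \<cdot>\<^sub>m S + b \<cdot>\<^sub>m 1\<^sub>m N) * K)"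
proof -
  define Y where "Y = x \<cdot>\<^sub>m 1\<^sub>m N + b \<cdot>\<^sub>m S"
  have Y: "Y \<in> carrier_mat N N" using S by (simp add: Y_def)
  have SK: "S * K \<in> carrier_mat N N" using S K by simp
  have X: "x \<cdot>\<^sub>m 1\<^sub>m N - b \<cdot>\<^sub>m S \<in> carrier_mat N N" using S by (auto intro: minus_carrier_mat)
  have "S * (b \<cdot>\<^sub>m 1\<^sub>m N + c \<cdot>\<^sub>m K) = b \<cdot>\<^sub>m S + c \<cdot>\<^sub>m (S * K)"
    using S K by (simp add: mult_add_distrib_mat[of S N N _ N] mult_smult_distrib[of S N N _ N])
  then have "Y * (x \<cdot>\<^sub>m 1\<^sub>m N - S * (b \<cdot>\<^sub>m 1\<^sub>m N + c \<cdot>\<^sub>m K))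
      = Y * ((x \<cdot>\<^sub>m 1\<^sub>m N - b \<cdot>\<^sub>m S) - c \<cdot>\<^sub>m (S * K))"
    using S SK by (intro arg_cong[where f = "(*) Y"] eq_matI) auto
  also have "\<dots> = Y * (x \<cdot>\<^sub>m 1\<^sub>m N - b \<cdot>\<^sub>m S) - c \<cdot>\<^sub>m (Y * S * K)"
    using Y X SK by (simp add: mult_minus_distrib_mat[OF Y X] mult_smult_distrib[OF Y SK]
        assoc_mult_mat[OF Y S K])
  also have "Y * S = x \<cdot>\<^sub>m S + b \<cdot>\<^sub>m 1\<^sub>m N"
    using S SS by (simp add: Y_def add_mult_distrib_mat[of _ N N _ _ N] mult_smult_assoc_mat[of _ N N _ N])
  also have "Y * (x \<cdot>\<^sub>m 1\<^sub>m N - b \<cdot>\<^sub>m S) = x \<cdot>\<^sub>m Y - b \<cdot>\<^sub>m (Y * S)"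
    using S Y by (simp add: mult_minus_distrib_mat[of Y N N _ N] mult_smult_distrib[of Y N N _ N])
  also have "\<dots> = (x\<^sup>2 - b\<^sup>2) \<cdot>\<^sub>m 1\<^sub>m N"
    unfolding \<open>Y * S = _\<close> using S
    by (intro eq_matI) (auto simp: Y_def power2_eq_square algebra_simps)
  finally show ?thesis unfolding Y_def .
qed

lemma det_scalar_minus_involution_mult_coin:
  fixes S d D :: "complex mat"
  assumes S: "S \<in> carrier_mat (2 * m) (2 * m)" and SS: "S * S = 1\<^sub>m (2 * m)"
    and trace: "trace S = 0"
    and d: "d \<in> carrier_mat n (2 * m)" and D: "D \<in> carrier_mat (2 * m) n"
    and dD: "d * D = 1\<^sub>m n" and "n \<le> m" and x: "x\<^sup>2 \<noteq> b\<^sup>2"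
  shows "det (x \<cdot>\<^sub>m 1\<^sub>m (2 * m) - S * (a \<cdot>\<^sub>m (D * d) + b \<cdot>\<^sub>m (1\<^sub>m (2 * m) - D * d)))
    = (x\<^sup>2 - b\<^sup>2) ^ (m - n) * det ((x\<^sup>2 - a * b) \<cdot>\<^sub>m 1\<^sub>m n - ((a - b) * x) \<cdot>\<^sub>m (d * S * D))"
proof -
  define N k c where "N = 2 * m" and "k = x\<^sup>2 - b\<^sup>2" and "c = a - b"
  define Y U A where "Y = x \<cdot>\<^sub>m 1\<^sub>m N + b \<cdot>\<^sub>m S"
    and "U = S * (a \<cdot>\<^sub>m (D * d) + b \<cdot>\<^sub>m (1\<^sub>m N - D * d))"
    and "A = c \<cdot>\<^sub>m ((x \<cdot>\<^sub>m S + b \<cdot>\<^sub>m 1\<^sub>m N) * D)"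
  have carrier: "S \<in> carrier_mat N N" "d \<in> carrier_mat n N" "D \<in> carrier_mat N n"
    "D * d \<in> carrier_mat N N" "x \<cdot>\<^sub>m S + b \<cdot>\<^sub>m 1\<^sub>m N \<in> carrier_mat N N" "A \<in> carrier_mat N n"
    "Y \<in> carrier_mat N N" "U \<in> carrier_mat N N" "x \<cdot>\<^sub>m 1\<^sub>m N - U \<in> carrier_mat N N"
    using S d D by (auto simp: N_def A_def Y_def U_def intro: minus_carrier_mat)
  have k: "k \<noteq> 0" using x by (simp add: k_def)
  have coin: "a \<cdot>\<^sub>m (D * d) + b \<cdot>\<^sub>m (1\<^sub>m N - D * d) = b \<cdot>\<^sub>m 1\<^sub>m N + c \<cdot>\<^sub>m (D * d)"
    using carrier by (intro eq_matI) (auto simp: c_def algebra_simps)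
  have "A * d = c \<cdot>\<^sub>m ((x \<cdot>\<^sub>m S + b \<cdot>\<^sub>m 1\<^sub>m N) * D * d)"
    unfolding A_def by (rule mult_smult_assoc_mat) (use carrier in auto)
  also have "(x \<cdot>\<^sub>m S + b \<cdot>\<^sub>m 1\<^sub>m N) * D * d = (x \<cdot>\<^sub>m S + b \<cdot>\<^sub>m 1\<^sub>m N) * (D * d)"
    by (rule assoc_mult_mat) (use carrier in auto)
  finally have factor: "Y * (x \<cdot>\<^sub>m 1\<^sub>m N - U) = k \<cdot>\<^sub>m 1\<^sub>m N - A * d"
    using scalar_add_involution_mult[OF carrier(1) _ carrier(4), of x b c] SS coin
    by (simp add: U_def Y_def k_def N_def)
  have "d * A = c \<cdot>\<^sub>m (d * ((x \<cdot>\<^sub>m S + b \<cdot>\<^sub>m 1\<^sub>m N) * D))"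
    unfolding A_def by (rule mult_smult_distrib) (use carrier in auto)
  also have "d * ((x \<cdot>\<^sub>m S + b \<cdot>\<^sub>m 1\<^sub>m N) * D) = d * (x \<cdot>\<^sub>m S + b \<cdot>\<^sub>m 1\<^sub>m N) * D"
    by (rule assoc_mult_mat[symmetric]) (use carrier in auto)
  also have "d * (x \<cdot>\<^sub>m S + b \<cdot>\<^sub>m 1\<^sub>m N) = x \<cdot>\<^sub>m (d * S) + b \<cdot>\<^sub>m d"
    using carrier by (simp add: mult_add_distrib_mat[of d n N _ N] mult_smult_distrib[of d n N _ N])
  also have "(x \<cdot>\<^sub>m (d * S) + b \<cdot>\<^sub>m d) * D = x \<cdot>\<^sub>m (d * S * D) + b \<cdot>\<^sub>m 1\<^sub>m n"
    using carrier dD by (simp add: add_mult_distrib_mat[of _ n N _ _ n] mult_smult_assoc_mat[of _ n N _ n])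
  finally have reduced: "k \<cdot>\<^sub>m 1\<^sub>m n - d * A = (x\<^sup>2 - a * b) \<cdot>\<^sub>m 1\<^sub>m n - (c * x) \<cdot>\<^sub>m (d * S * D)"
    using carrier by (intro eq_matI) (auto simp: k_def c_def algebra_simps power2_eq_square)
  have det_Y: "det Y = k ^ m"
  proof -
    have "Y = x \<cdot>\<^sub>m 1\<^sub>m (2 * m) - (- b) \<cdot>\<^sub>m S" using carrier by (intro eq_matI) (auto simp: Y_def N_def)
    then show ?thesis by (simp add: det_scalar_minus_smult_involution[OF S SS trace] k_def)
  qed
  have "k ^ m * k ^ n * det (x \<cdot>\<^sub>m 1\<^sub>m N - U) = k ^ n * (det Y * det (x \<cdot>\<^sub>m 1\<^sub>m N - U))"
    by (simp add: det_Y)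
  also have "\<dots> = k ^ n * det (k \<cdot>\<^sub>m 1\<^sub>m N - A * d)"
    using det_mult[OF carrier(7,9)] by (simp add: factor)
  also have "\<dots> = k ^ N * det (k \<cdot>\<^sub>m 1\<^sub>m n - d * A)"
    by (rule det_scalar_minus_mult_comm[OF carrier(6,2) k])
  also have "\<dots> = k ^ m * k ^ n * (k ^ (m - n) * det ((x\<^sup>2 - a * b) \<cdot>\<^sub>m 1\<^sub>m n - (c * x) \<cdot>\<^sub>m (d * S * D)))"
    using \<open>n \<le> m\<close> reduced by (simp add: N_def mult_2 power_add[symmetric])
  finally show ?thesis using k by (simp add: N_def U_def k_def c_def)
qed

lemma poly_eq_if_eq_outside_finite:
  fixes p q :: "'a :: {idom, ring_char_0} poly"
  assumes "finite F" and "\<And>x. x \<notin> F \<Longrightarrow> poly p x = poly q x"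
  shows "p = q"
proof (rule ccontr)
  assume "p \<noteq> q"
  then have "finite {x. poly (p - q) x = 0}" by (intro poly_roots_finite) simp
  moreover have "- F \<subseteq> {x. poly (p - q) x = 0}" using assms(2) by auto
  ultimately have "finite (F \<union> - F)" using assms(1) finite_subset by blast
  then show False using infinite_UNIV_char_0[where 'a = 'a] by simp
qed

lemma mat_adjoint_carrier: "A \<in> carrier_mat nr nc \<Longrightarrow> mat_adjoint A \<in> carrier_mat nc nr"
  by (auto simp: mat_adjoint_def mat_of_rows_def)

lemma char_poly_involution_mult_coin:
  fixes S d D :: "complex mat"
  assumes S: "S \<in> carrier_mat (2 * m) (2 * m)" and SS: "S * S = 1\<^sub>m (2 * m)"
    and trace: "trace S = 0"
    and d: "d \<in> carrier_mat n (2 * m)" and D: "D \<in> carrier_mat (2 * m) n"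
    and dD: "d * D = 1\<^sub>m n" and nm: "n \<le> m"
    and char_poly: "char_poly (d * S * D) = (\<Prod>\<mu>\<leftarrow>\<mu>s. [:- \<mu>, 1:])"
  shows "char_poly (S * (a \<cdot>\<^sub>m (D * d) + b \<cdot>\<^sub>m (1\<^sub>m (2 * m) - D * d)))
    = (\<Prod>\<mu>\<leftarrow>\<mu>s. [:- (a * b), - ((a - b) * \<mu>), 1:]) * [:- b, 1:] ^ (m - n) * [:b, 1:] ^ (m - n)"
    (is "char_poly ?U = ?R")
proof (rule poly_eq_if_eq_outside_finite[of "{b, - b}"])
  fix x assume "x \<notin> {b, - b}"
  then have x: "x\<^sup>2 \<noteq> b\<^sup>2" by (simp add: power2_eq_iff)
  have "?U \<in> carrier_mat (2 * m) (2 * m)" using S D d by (auto intro: minus_carrier_mat)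
  then have "poly (char_poly ?U) x = det (x \<cdot>\<^sub>m 1\<^sub>m (2 * m) - ?U)" by (rule poly_char_poly_eq_det)
  also have "\<dots> = (x\<^sup>2 - b\<^sup>2) ^ (m - n) * det ((x\<^sup>2 - a * b) \<cdot>\<^sub>m 1\<^sub>m n - ((a - b) * x) \<cdot>\<^sub>m (d * S * D))"
    by (rule det_scalar_minus_involution_mult_coin[OF S SS trace d D dD nm x])
  also have "det ((x\<^sup>2 - a * b) \<cdot>\<^sub>m 1\<^sub>m n - ((a - b) * x) \<cdot>\<^sub>m (d * S * D))
      = (\<Prod>\<mu>\<leftarrow>\<mu>s. x\<^sup>2 - a * b - (a - b) * x * \<mu>)"
    by (rule det_scalar_minus_smult_char_poly[OF _ char_poly]) (use d S D in auto)
  finally show "poly (char_poly ?U) x = poly ?R x"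
    by (simp add: poly_prod_list o_def power2_eq_square algebra_simps power_mult_distrib[symmetric])
qed simp

lemma arc_reversal_carrier: "arc_reversal arcs \<in> carrier_mat (length arcs) (length arcs)"
  by (simp add: arc_reversal_def)

lemma arc_reversal_index:
  assumes "i < length arcs" and "j < length arcs"
  shows "arc_reversal arcs $$ (i, j) = (if arcs ! j = prod.swap (arcs ! i) then 1 else 0)"
  using assms by (simp add: arc_reversal_def prod.swap_def)

lemma arc_reversal_involution:
  assumes distinct: "distinct arcs" and swap_closed: "\<And>e. e \<in> set arcs \<Longrightarrow> prod.swap e \<in> set arcs"
  shows "arc_reversal arcs * arc_reversal arcs = 1\<^sub>m (length arcs)"
proof (rule eq_matI)
  let ?L = "length arcs" and ?S = "arc_reversal arcs"
  fix i j assume "i < dim_row (1\<^sub>m ?L)" "j < dim_col (1\<^sub>m ?L)"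
  then have i: "i < ?L" and j: "j < ?L" by auto
  obtain r where r: "r < ?L" "arcs ! r = prod.swap (arcs ! i)"
    using swap_closed[OF nth_mem[OF i]] by (auto simp: in_set_conv_nth)
  have hit: "arcs ! k = prod.swap (arcs ! i) \<longleftrightarrow> k = r" if "k < ?L" for k
    using that r distinct nth_eq_iff_index_eq by metis
  have "(?S * ?S) $$ (i, j) = (\<Sum>k\<in>{0..<?L}. ?S $$ (i, k) * ?S $$ (k, j))"
    using i j arc_reversal_carrier[of arcs] by (simp add: scalar_prod_def)
  also have "\<dots> = (\<Sum>k\<in>{0..<?L}. if k = r then ?S $$ (r, j) else 0)"
    using i by (intro sum.cong) (auto simp: arc_reversal_index hit)
  also have "\<dots> = (if j = i then 1 else 0)"
    using i j r distinct by (simp add: arc_reversal_index nth_eq_iff_index_eq)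
  finally show "(?S * ?S) $$ (i, j) = 1\<^sub>m ?L $$ (i, j)" using i j by simp
qed (simp_all add: arc_reversal_def)

lemma trace_arc_reversal:
  assumes "\<And>u v. (u, v) \<in> set arcs \<Longrightarrow> u \<noteq> v"
  shows "trace (arc_reversal arcs) = 0"
proof -
  have "arcs ! i \<noteq> prod.swap (arcs ! i)" if "i < length arcs" for i
    using assms[of "fst (arcs ! i)" "snd (arcs ! i)"] nth_mem[OF that] by (cases "arcs ! i") auto
  then show ?thesis
    using arc_reversal_carrier[of arcs] by (auto simp: trace_def arc_reversal_index intro!: sum.neutral)
qed

lemma length_arc_enum:
  assumes G: "simple_graph n E" and arcs: "arc_enum n E arcs"
  shows "length arcs = 2 * num_edges E"
proof -
  define edge :: "nat \<times> nat \<Rightarrow> nat set" where "edge = (\<lambda>(u, v). {u, v})"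
  have edges: "{{u, v} | u v. E u v} = edge ` set arcs"
    using arcs by (auto simp: arc_enum_def edge_def)
  have fibre: "card {e \<in> set arcs. edge e = {u, v}} = 2" if "E u v" for u v
  proof -
    have "{e \<in> set arcs. edge e = {u, v}} = {(u, v), (v, u)}"
      using that G arcs by (auto simp: arc_enum_def edge_def simple_graph_def doubleton_eq_iff)
    moreover have "u \<noteq> v" using that G by (auto simp: simple_graph_def)
    ultimately show ?thesis by simp
  qed
  have "length arcs = card (set arcs)" using arcs by (metis arc_enum_def distinct_card)
  also have "\<dots> = (\<Sum>f\<in>edge ` set arcs. card {e \<in> set arcs. edge e = f})"
    unfolding card_eq_sum by (rule sum.image_gen) simp
  also have "\<dots> = (\<Sum>f\<in>edge ` set arcs. 2)"
    using arcs fibre by (intro sum.cong) (auto simp: arc_enum_def edge_def)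
  also have "\<dots> = 2 * num_edges E" by (simp add: num_edges_def edges)
  finally show ?thesis .
qed

lemma arc_reversal_arc_enum:
  assumes "simple_graph n E" and "arc_enum n E arcs"
  defines "N \<equiv> 2 * num_edges E"
  shows "arc_reversal arcs \<in> carrier_mat N N" and "arc_reversal arcs * arc_reversal arcs = 1\<^sub>m N"
    and "trace (arc_reversal arcs) = 0"
  using arc_reversal_carrier[of arcs] arc_reversal_involution[of arcs] trace_arc_reversal[of arcs]
    length_arc_enum[OF assms(1,2)] assms(1,2)
  by (auto simp: N_def arc_enum_def simple_graph_def)

lemma quadratic_root_pair:
  fixes p q r :: "'a :: field_char_0"
  assumes "r\<^sup>2 = p\<^sup>2 + 4 * q"
  shows "[:- ((p + r) / 2), 1:] * [:- ((p - r) / 2), 1:] = [:- q, - p, 1:]"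
proof -
  have "(p - r) * (p + r) = - (q * 4)"
    using assms by (simp add: algebra_simps power2_eq_square)
  moreover have "- ((p - r) / 2) - (p + r) / 2 = - p" by (simp add: field_simps)
  ultimately show ?thesis by simp
qed

theorem corollary3:
  fixes n :: nat and E :: "nat \<Rightarrow> nat \<Rightarrow> bool" and arcs :: "(nat \<times> nat) list"
    and a b c :: complex and d :: "complex mat" and \<mu>s :: "complex list"
  assumes "simple_graph n E" and "graph_connected n E"
    and "arc_enum n E arcs"
    and "num_edges E \<ge> n"
    and "c = a - b"
    and "d \<in> carrier_mat n (2 * num_edges E)"
    and "d * mat_adjoint d = 1\<^sub>m n"
    and "char_poly (d * arc_reversal arcs * mat_adjoint d)
           = prod_list (map (\<lambda>\<mu>. [:- \<mu>, 1:]) \<mu>s)"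
  shows "let m = num_edges E;
             C = a \<cdot>\<^sub>m (mat_adjoint d * d) + b \<cdot>\<^sub>m (1\<^sub>m (2 * m) - mat_adjoint d * d);
             U = arc_reversal arcs * C
         in char_poly U =
              prod_list (map (\<lambda>\<mu>. [:- ((c * \<mu> + csqrt (c\<^sup>2 * \<mu>\<^sup>2 + 4 * a * b)) / 2), 1:]
                                 * [:- ((c * \<mu> - csqrt (c\<^sup>2 * \<mu>\<^sup>2 + 4 * a * b)) / 2), 1:]) \<mu>s)
              * [:- b, 1:] ^ (m - n) * [:b, 1:] ^ (m - n)"
proof -
  define m where "m = num_edges E"
  have quadratics: "[:- ((c * \<mu> + csqrt (c\<^sup>2 * \<mu>\<^sup>2 + 4 * a * b)) / 2), 1:]
      * [:- ((c * \<mu> - csqrt (c\<^sup>2 * \<mu>\<^sup>2 + 4 * a * b)) / 2), 1:] = [:- (a * b), - (c * \<mu>), 1:]" for \<mu>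
    by (rule quadratic_root_pair) (simp add: power_mult_distrib)
  have "char_poly (arc_reversal arcs * (a \<cdot>\<^sub>m (mat_adjoint d * d) + b \<cdot>\<^sub>m (1\<^sub>m (2 * m) - mat_adjoint d * d)))
    = (\<Prod>\<mu>\<leftarrow>\<mu>s. [:- (a * b), - (c * \<mu>), 1:]) * [:- b, 1:] ^ (m - n) * [:b, 1:] ^ (m - n)"
    using char_poly_involution_mult_coin[OF arc_reversal_arc_enum[OF assms(1,3)]
        assms(6) mat_adjoint_carrier[OF assms(6)] assms(7) assms(4) assms(8)]
    by (simp add: m_def assms(5))
  then show ?thesis unfolding Let_def quadratics m_def[symmetric] .
qed

end
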